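(* Let $T$ be a weighted star (a star $K_{1,n}$ with nonzero real edge weights). Then $T^{\#}$ is isomorphic to $T$.
   Context: For a weighted graph $G$ with adjacency matrix $A$ (entry $(i,j)$ equal to the weight of edge $v_iv_j$, or $0$ if no edge), $A^{\#}$ is the group inverse of $A$ (unique $X$ with $AXA=A$, $XAX=X$, $AX=XA$), and the group inverse graph $G^{\#}$ is the weighted graph on the same vertex set with $v_iv_j$ an edge iff $(A^{\#})_{ij}\neq 0$, weighted by that entry. Two weighted graphs are called isomorphic if their underlying (unweighted) graphs are isomorphic. *)

theory Defs
  imports "HOL-Analysis.Analysis"
begin

text \<open>A weighted graph on the finite vertex type 'n is given by its adjacency
matrix A (symmetric; entry (i,j) is the weight of edge ij, 0 if no edge).\<close>

definition is_group_inverse :: "real^'n^'n \<Rightarrow> real^'n^'n \<Rightarrow> bool" where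
  "is_group_inverse A X \<longleftrightarrow> A ** X ** A = A \<and> X ** A ** X = X \<and> A ** X = X ** A"

definition group_inverse :: "real^'n^'n \<Rightarrow> real^'n^'n" where
  "group_inverse A = (THE X. is_group_inverse A X)"

definition weighted_star :: "real^'n^'n \<Rightarrow> bool" where
  "weighted_star A \<longleftrightarrow> transpose A = A \<and> (\<forall>i. A $ i $ i = 0) \<and>
     (\<exists>c. \<forall>i j. i \<noteq> j \<longrightarrow> (A $ i $ j \<noteq> 0 \<longleftrightarrow> (i = c \<or> j = c)))"

definition underlying_iso :: "real^'n^'n \<Rightarrow> real^'n^'n \<Rightarrow> bool" where
  "underlying_iso A B \<longleftrightarrow> (\<exists>f. bij f \<and> (\<forall>i j. A $ i $ j \<noteq> 0 \<longleftrightarrow> B $ f i $ f j \<noteq> 0))"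

end

theory Submission
  imports Defs
begin

(* A weighted star with centre c is A = a e_c^T + e_c a^T, where a is the weight vector of
   the centre (a_c = 0). Then A^2 = a a^T + (a . a) e_c e_c^T and A^3 = (a . a) A, so
   A / (a . a) satisfies the three group-inverse equations; being a nonzero multiple of A,
   it has the same underlying graph. *)

lemma is_group_inverse_unique:
  assumes "is_group_inverse A X" and "is_group_inverse A Y"
  shows "X = Y"
proof -
  have X: "A ** X ** A = A" "X ** A ** X = X" "A ** X = X ** A"
    and Y: "A ** Y ** A = A" "Y ** A ** Y = Y" "A ** Y = Y ** A"
    using assms unfolding is_group_inverse_def by auto
  have AX_eq_AY: "A ** X = A ** Y"
  proof -
    have "A ** X = (A ** Y ** A) ** X" using Y(1) by simp
    also have "\<dots> = (Y ** A) ** (A ** X)" by (simp add: matrix_mul_assoc Y(3))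
    also have "\<dots> = Y ** (A ** X ** A)" by (metis matrix_mul_assoc X(3))
    also have "\<dots> = A ** Y" using X(1) Y(3) by simp
    finally show ?thesis .
  qed
  have "X = X ** (A ** X)" using X(2) by (simp add: matrix_mul_assoc)
  also have "\<dots> = (A ** Y) ** Y" by (metis matrix_mul_assoc AX_eq_AY X(3))
  also have "\<dots> = Y" using Y(2,3) by (simp add: matrix_mul_assoc)
  finally show ?thesis .
qed

lemma group_inverse_eqI:
  assumes "is_group_inverse A X"
  shows "group_inverse A = X"
  unfolding group_inverse_def using assms is_group_inverse_unique by blast

lemma is_group_inverse_scaleR_self:
  assumes "A ** A ** A = s *\<^sub>R A" and "s \<noteq> 0"
  shows "is_group_inverse A (inverse s *\<^sub>R A)"
  using assms unfolding is_group_inverse_def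
  by (simp add: matrix_scalar_ac scalar_matrix_assoc[symmetric] matrix_mul_assoc)

lemma underlying_iso_scaleR:
  assumes "r \<noteq> 0"
  shows "underlying_iso A (r *\<^sub>R A)"
  unfolding underlying_iso_def using assms by (intro exI[of _ id]) auto

definition star_matrix :: "'n \<Rightarrow> real^'n \<Rightarrow> real^'n^'n" where
  "star_matrix c a = (\<chi> i j. (if i = c then a $ j else 0) + (if j = c then a $ i else 0))"

lemma star_matrix_square:
  fixes a :: "real^'n"
  assumes "a $ c = 0"
  shows "star_matrix c a ** star_matrix c a =
    (\<chi> i j. a $ i * a $ j + (if i = c \<and> j = c then a \<bullet> a else 0))"
  using assms
  by (auto simp add: vec_eq_iff matrix_matrix_mult_def star_matrix_def inner_vec_def algebra_simps
      sum.distrib if_distrib[of "\<lambda>x. x * _"] if_distrib[of "\<lambda>x. _ * x"] cong: if_cong)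

lemma star_matrix_cube:
  fixes a :: "real^'n"
  assumes "a $ c = 0"
  shows "star_matrix c a ** star_matrix c a ** star_matrix c a = (a \<bullet> a) *\<^sub>R star_matrix c a"
  unfolding star_matrix_square[OF assms]
  using assms
  by (simp add: vec_eq_iff matrix_matrix_mult_def star_matrix_def inner_vec_def algebra_simps
      sum.distrib if_distrib[of "\<lambda>x. x * _"] if_distrib[of "\<lambda>x. _ * x"] sum_distrib_left[symmetric]
      cong: if_cong)

lemma weighted_starE:
  assumes "weighted_star A"
  obtains c a where "A = star_matrix c a" and "a $ c = 0" and "\<And>j. j \<noteq> c \<Longrightarrow> a $ j \<noteq> 0"
proof -
  obtain c where sym: "transpose A = A" and diag: "\<And>i. A $ i $ i = 0"
    and adj: "\<And>i j. i \<noteq> j \<Longrightarrow> A $ i $ j \<noteq> 0 \<longleftrightarrow> i = c \<or> j = c"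
    using assms unfolding weighted_star_def by blast
  have column: "A $ i $ c = A $ c $ i" if "i \<noteq> c" for i
    using sym by (metis transpose_def vec_lambda_beta)
  have off_centre: "A $ i $ j = 0" if "i \<noteq> c" and "j \<noteq> c" for i j
    using diag adj[of i j] that by (cases "i = j") auto
  have "A = star_matrix c (A $ c)"
    unfolding star_matrix_def vec_eq_iff by (auto simp: diag column off_centre)
  moreover have "A $ c $ j \<noteq> 0" if "j \<noteq> c" for j
    using adj[of c j] that by blast
  ultimately show ?thesis
    using that diag by blast
qed

theorem corollary2p3:
  fixes A :: "real^'n^'n"
  assumes "CARD('n) \<ge> 2" and "weighted_star A"
  shows "(\<exists>!X. is_group_inverse A X) \<and> underlying_iso A (group_inverse A)"
proof -
  obtain c a where star: "A = star_matrix c a" and "a $ c = 0"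
    and leaves: "\<And>j. j \<noteq> c \<Longrightarrow> a $ j \<noteq> 0"
    using weighted_starE[OF assms(2)] by blast
  have "\<not> UNIV \<subseteq> {c}"
  proof
    assume "UNIV \<subseteq> {c}"
    then have "CARD('n) \<le> card {c}" by (intro card_mono) auto
    with assms(1) show False by simp
  qed
  then have nonzero: "a \<bullet> a \<noteq> 0"
    using leaves by auto
  moreover have "A ** A ** A = (a \<bullet> a) *\<^sub>R A"
    unfolding star by (rule star_matrix_cube[OF \<open>a $ c = 0\<close>])
  ultimately have gi: "is_group_inverse A (inverse (a \<bullet> a) *\<^sub>R A)"
    by (rule is_group_inverse_scaleR_self[rotated])
  then have "\<exists>!X. is_group_inverse A X"
    by (rule ex1I) (rule is_group_inverse_unique[OF _ gi])
  moreover have "underlying_iso A (inverse (a \<bullet> a) *\<^sub>R A)"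
    using nonzero by (intro underlying_iso_scaleR nonzero_imp_inverse_nonzero)
  ultimately show ?thesis
    unfolding group_inverse_eqI[OF gi] ..
qed

end
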